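(* Let $f:U\subseteq\mathbb{R}^n\to\mathbb{R}$ satisfy the Regularity Assumption described in the context, with single-valued adaptation $\partial_1 f$ of its Clarke subdifferential and Newton differential $\mathcal{H}f$. Then there exists $\tau\in(0,\infty)$ such that for all $x\in U$ and for all $$x^{+}\in\{x-H^{-1}\partial_1 f(x)\;|\;H\in\mathcal{H}f(x),\ \det H\neq 0\}\cap U,$$ one has $$\|\partial_1 f(x)\|\le \tau\,\|x^{+}-x\|.$$
   Context: Weak uniform Newton differentiability: a function $F:U\subseteq\mathbb{R}^n\to\mathbb{R}^n$ is weakly uniformly Newton differentiable on $U$ if there is a set-valued map $\mathcal{H}F:U\rightrightarrows\mathbb{R}^{n\times n}$ (the Newton differential) and $c>0$ such that for all $x,y\in U$ (with $x\ne y$), $\sup_{H\in\mathcal{H}F(x)}\frac{\|F(x)-F(y)-H(x-y)\|}{\|x-y\|}\le c$; the smallest such $c$ is the constant of Newton differentiability. Single-valued adaptation: for a set-valued $F:U\rightrightarrows\mathbb{R}^n$, any selection $F_1$ of $x\mapsto \mathrm{proj}_{\overline{F(x)}}0$ is called a single-valued adaptation of $F$. Regularity Assumption: $f:U\subseteq\mathbb{R}^n\to\mathbb{R}$ is Lipschitz continuous, $U$ is small enough that $f$ has on $U$ an isolated local minimum and unique critical point at $\bar x$; $\partial_1 f$ denotes the single-valued adaptation of the Clarke subdifferential of $f$; $\partial_1 f$ is weakly uniformly Newton differentiable on $U$ with Newton differential $\mathcal{H}f$ and constant $c$; for every $x\in U$, every $H\in\mathcal{H}f(x)$ is positive definite;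 $\|H^{-1}\|\le\Omega<\infty$ and $\|H\|\le\omega<\infty$ for all $H\in\bigcup_{x\in U}\mathcal{H}f(x)$; and $c\,\Omega<1$. *)

theory Defs
  imports "HOL-Analysis.Analysis"
begin

definition clarke_dir :: "(real^'n \<Rightarrow> real) \<Rightarrow> real^'n \<Rightarrow> real^'n \<Rightarrow> ereal" where
  "clarke_dir f x v =
     Limsup (at (x, 0) within (UNIV \<times> {0<..}))
            (\<lambda>(y, t). ereal ((f (y + t *\<^sub>R v) - f y) / t))"

definition clarke_subdiff :: "(real^'n \<Rightarrow> real) \<Rightarrow> real^'n \<Rightarrow> (real^'n) set" where
  "clarke_subdiff f x = {\<xi>. \<forall>v. ereal (\<xi> \<bullet> v) \<le> clarke_dir f x v}"

definition single_valued_adaptation ::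
  "('a::real_normed_vector set) \<Rightarrow> ('a \<Rightarrow> 'b::real_normed_vector set) \<Rightarrow> ('a \<Rightarrow> 'b) \<Rightarrow> bool" where
  "single_valued_adaptation U F g \<longleftrightarrow>
     (\<forall>x\<in>U. g x \<in> closure (F x) \<and> (\<forall>y\<in>closure (F x). norm (g x) \<le> norm y))"

definition weakly_uniformly_newton_diff ::
  "(real^'n) set \<Rightarrow> (real^'n \<Rightarrow> real^'n) \<Rightarrow> (real^'n \<Rightarrow> (real^'n^'n) set) \<Rightarrow> real \<Rightarrow> bool" where
  "weakly_uniformly_newton_diff U F HF c \<longleftrightarrow> c > 0 \<and>
     (\<forall>x\<in>U. \<forall>y\<in>U. x \<noteq> y \<longrightarrow>
        (\<forall>H\<in>HF x. norm (F x - F y - H *v (x - y)) / norm (x - y) \<le> c))"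

definition pos_def_matrix :: "real^'n^'n \<Rightarrow> bool" where
  "pos_def_matrix H \<longleftrightarrow> (\<forall>v. v \<noteq> 0 \<longrightarrow> v \<bullet> (H *v v) > 0)"

definition mat_norm :: "real^'n^'n \<Rightarrow> real" where
  "mat_norm H = onorm (\<lambda>v. H *v v)"

end

theory Submission
  imports Defs
begin

text \<open>A Newton step \<open>x\<^sup>+ = x - H\<inverse> g\<close> can be undone by \<open>H\<close>: \<open>g = - H (x\<^sup>+ - x)\<close>.
  Hence \<open>\<parallel>g\<parallel> \<le> \<parallel>H\<parallel> \<parallel>x\<^sup>+ - x\<parallel>\<close>, and the uniform bound \<open>\<omega>\<close> on the Newton differentials gives
  \<open>\<tau> = max \<omega> 1\<close> (the \<open>max\<close> only ensures \<open>\<tau> > 0\<close>).\<close>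

lemma matrix_inv_right:
  fixes A :: "'a::semiring_1^'n^'m"
  assumes "invertible A"
  shows "A ** matrix_inv A = mat 1"
  using someI_ex[OF assms[unfolded invertible_def]] unfolding matrix_inv_def by blast

lemma matrix_vector_mult_matrix_inv:
  fixes H :: "real^'n^'n"
  assumes "det H \<noteq> 0"
  shows "H *v (matrix_inv H *v g) = g"
proof -
  have "invertible H"
    using assms by (simp add: invertible_det_nz)
  then show ?thesis
    by (simp add: matrix_vector_mul_assoc matrix_inv_right)
qed

lemma norm_matrix_vector_mult_le:
  fixes H :: "real^'n^'n"
  shows "norm (H *v v) \<le> mat_norm H * norm v"
  unfolding mat_norm_def
  by (rule onorm) (simp add: linear_conv_bounded_linear matrix_vector_mul_linear)

lemma norm_le_mat_norm_newton_step:
  fixes H :: "real^'n^'n"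
  assumes "det H \<noteq> 0"
  shows "norm g \<le> mat_norm H * norm ((x - matrix_inv H *v g) - x)"
proof -
  have "norm g = norm (H *v (matrix_inv H *v g))"
    using assms by (simp add: matrix_vector_mult_matrix_inv)
  also have "\<dots> \<le> mat_norm H * norm (matrix_inv H *v g)"
    by (rule norm_matrix_vector_mult_le)
  finally show ?thesis
    by simp
qed

theorem mainTheorem2:
  fixes f :: "real^'n \<Rightarrow> real"
    and U :: "(real^'n) set"
    and xbar :: "real^'n"
    and d1f :: "real^'n \<Rightarrow> real^'n"
    and Hf :: "real^'n \<Rightarrow> (real^'n^'n) set"
    and c \<Omega> \<omega> :: real
  assumes U_open: "open U"
    and lip: "\<exists>L. L-lipschitz_on U f"
    and xbar_in: "xbar \<in> U"
    and isolated_min: "\<exists>e>0. \<forall>y\<in>U \<inter> ball xbar e. y \<noteq> xbar \<longrightarrow> f xbar < f y"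
    and unique_crit: "\<forall>y\<in>U. 0 \<in> clarke_subdiff f y \<longleftrightarrow> y = xbar"
    and adapt: "single_valued_adaptation U (clarke_subdiff f) d1f"
    and newton: "weakly_uniformly_newton_diff U d1f Hf c"
    and posdef: "\<forall>x\<in>U. \<forall>H\<in>Hf x. pos_def_matrix H"
    and inv_bound: "\<forall>x\<in>U. \<forall>H\<in>Hf x. mat_norm (matrix_inv H) \<le> \<Omega>"
    and bound: "\<forall>x\<in>U. \<forall>H\<in>Hf x. mat_norm H \<le> \<omega>"
    and contr: "c * \<Omega> < 1"
  shows "\<exists>\<tau>>0. \<forall>x\<in>U. \<forall>xp.
           xp \<in> {x - matrix_inv H *v d1f x | H. H \<in> Hf x \<and> det H \<noteq> 0} \<inter> U \<longrightarrow>
           norm (d1f x) \<le> \<tau> * norm (xp - x)"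
proof (intro exI[of _ "max \<omega> 1"] conjI ballI allI impI)
  fix x xp
  assume "x \<in> U" and "xp \<in> {x - matrix_inv H *v d1f x | H. H \<in> Hf x \<and> det H \<noteq> 0} \<inter> U"
  then obtain H where H: "H \<in> Hf x" "det H \<noteq> 0" and xp: "xp = x - matrix_inv H *v d1f x"
    by blast
  have "norm (d1f x) \<le> mat_norm H * norm (xp - x)"
    unfolding xp using H(2) by (rule norm_le_mat_norm_newton_step)
  also have "\<dots> \<le> max \<omega> 1 * norm (xp - x)"
    using bound \<open>x \<in> U\<close> H(1) by (intro mult_right_mono) force+
  finally show "norm (d1f x) \<le> max \<omega> 1 * norm (xp - x)" .
qed simp

end
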